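(* The projection $S_{12}$ consists precisely of the points $(d_1,d_2)\in\mathbb{R}^2$ such that $d_1\ge0$, $d_2\ge0$ and $d_1+d_2\le 3/4$.
   Context: For a finite graph $G$ and a $k$-vertex graph $H$, $d(H,G)$ is the probability that a uniformly random $k$-element subset of $V(G)$ induces a subgraph isomorphic to $H$. For $k\in\{0,1,2,3\}$ let $H_k$ be the 3-vertex graph with exactly $k$ edges. Let $S\subseteq\mathbb{R}^4$ be the set of all $(d_0,d_1,d_2,d_3)$ such that for every $\varepsilon>0$ and every $n\in\mathbb{N}$ there is a graph $G$ with at least $n$ vertices satisfying $|d(H_k,G)-d_k|\le\varepsilon$ for $k=0,1,2,3$. For $i<j$, $S_{ij}=\{(d_i,d_j):(d_0,d_1,d_2,d_3)\in S\}$. *)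

theory Defs
  imports Complex_Main
begin

text \<open>A finite simple graph is represented (up to isomorphism) by a vertex set
  {0..<m} together with a symmetric, irreflexive adjacency relation E.\<close>

definition simple_graph :: "(nat \<Rightarrow> nat \<Rightarrow> bool) \<Rightarrow> bool" where
  "simple_graph E \<longleftrightarrow> (\<forall>u v. E u v \<longleftrightarrow> E v u) \<and> (\<forall>v. \<not> E v v)"

definition induces_iso :: "(nat \<Rightarrow> nat \<Rightarrow> bool) \<Rightarrow> nat \<Rightarrow> (nat \<Rightarrow> nat \<Rightarrow> bool) \<Rightarrow> nat set \<Rightarrow> bool" where
  "induces_iso H k E A \<longleftrightarrow>
     (\<exists>f. bij_betw f {0..<k} A \<and> (\<forall>i\<in>{0..<k}. \<forall>j\<in>{0..<k}. H i j \<longleftrightarrow> E (f i) (f j)))"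

definition ind_density :: "(nat \<Rightarrow> nat \<Rightarrow> bool) \<Rightarrow> nat \<Rightarrow> nat \<Rightarrow> (nat \<Rightarrow> nat \<Rightarrow> bool) \<Rightarrow> real" where
  "ind_density H k m E =
     real (card {A. A \<subseteq> {0..<m} \<and> card A = k \<and> induces_iso H k E A}) / real (m choose k)"

text \<open>H_k: the 3-vertex graph on {0,1,2} with exactly k edges
  (edges {0,1}, {0,2}, {1,2} added in this order).\<close>

definition Hk :: "nat \<Rightarrow> nat \<Rightarrow> nat \<Rightarrow> bool" where
  "Hk k i j \<longleftrightarrow> i \<noteq> j \<and> i < 3 \<and> j < 3 \<and> i + j \<le> k"

definition S_set :: "(real \<times> real \<times> real \<times> real) set" where
  "S_set = {(d0, d1, d2, d3). \<forall>\<epsilon>>0. \<forall>n::nat. \<exists>m E. m \<ge> n \<and> simple_graph E \<and>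
      \<bar>ind_density (Hk 0) 3 m E - d0\<bar> \<le> \<epsilon> \<and>
      \<bar>ind_density (Hk 1) 3 m E - d1\<bar> \<le> \<epsilon> \<and>
      \<bar>ind_density (Hk 2) 3 m E - d2\<bar> \<le> \<epsilon> \<and>
      \<bar>ind_density (Hk 3) 3 m E - d3\<bar> \<le> \<epsilon>}"

definition S12 :: "(real \<times> real) set" where
  "S12 = {(d1, d2). \<exists>d0 d3. (d0, d1, d2, d3) \<in> S_set}"

end

(*
  Upper bound: call x a splitting vertex of a 3-set {x, y, z} if x is adjacent to exactly one of
  y and z. A 3-set spanning one or two edges has exactly two splitting vertices, every other
  3-set has none, and a vertex of degree d splits d (m - 1 - d) <= (m - 1)^2 / 4 pairs. Hence
  d(H_1, G) + d(H_2, G) <= 3/4 (m - 1) / (m - 2) for every graph G on m vertices.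

  Lower bound: blow up a fixed five-vertex pattern with part weights depending on (u, v) in the
  unit square. The limiting densities of H_1 and H_2 are polynomials in u and v, and the sides
  u = 0, u = 1, v = 0, v = 1 of the square are mapped to the origin, the hypotenuse
  d_1 + d_2 = 3/4 and the legs d_1 = 0, d_2 = 0 of the triangle. By the Poincare-Miranda
  theorem, a consequence of Brouwer's fixed point theorem, every point of the triangle is hit.
*)
theory Submission
  imports Defs "HOL-Analysis.Analysis" "HOL-Real_Asymp.Real_Asymp"
begin

section \<open>Counting 3-subsets by ordered triples\<close>

definition triple_sum :: "nat \<Rightarrow> (nat \<Rightarrow> nat \<Rightarrow> nat \<Rightarrow> real) \<Rightarrow> real" where
  "triple_sum m F = (\<Sum>x<m. \<Sum>y<m. \<Sum>z<m. F x y z)"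

lemma triple_sum_swap12: "triple_sum m F = triple_sum m (\<lambda>x y z. F y x z)"
  unfolding triple_sum_def by (rule sum.swap)

lemma triple_sum_swap23: "triple_sum m F = triple_sum m (\<lambda>x y z. F x z y)"
  unfolding triple_sum_def by (rule sum.cong[OF refl], rule sum.swap)

lemma triple_sum_cong:
  "(\<And>x y z. x < m \<Longrightarrow> y < m \<Longrightarrow> z < m \<Longrightarrow> F x y z = G x y z) \<Longrightarrow> triple_sum m F = triple_sum m G"
  unfolding triple_sum_def by (intro sum.cong refl) auto

lemma triple_sum_mono:
  "(\<And>x y z. x < m \<Longrightarrow> y < m \<Longrightarrow> z < m \<Longrightarrow> F x y z \<le> G x y z) \<Longrightarrow> triple_sum m F \<le> triple_sum m G"
  unfolding triple_sum_def by (intro sum_mono) auto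

lemma triple_sum_add: "triple_sum m (\<lambda>x y z. F x y z + G x y z) = triple_sum m F + triple_sum m G"
  unfolding triple_sum_def by (simp add: sum.distrib)

lemma triple_sum_diff: "triple_sum m (\<lambda>x y z. F x y z - G x y z) = triple_sum m F - triple_sum m G"
  unfolding triple_sum_def by (simp add: sum_subtractf)

lemma triple_sum_cmult: "triple_sum m (\<lambda>x y z. c * F x y z) = c * triple_sum m F"
  unfolding triple_sum_def by (simp add: sum_distrib_left)

lemma triple_sum_abs_le: "\<bar>triple_sum m F\<bar> \<le> triple_sum m (\<lambda>x y z. \<bar>F x y z\<bar>)"
  unfolding triple_sum_def by (intro order_trans[OF sum_abs] sum_mono) auto

lemma triple_sum_of_bool:
  "triple_sum m (\<lambda>x y z. of_bool (P x y z)) = real (card {(x, y, z). x < m \<and> y < m \<and> z < m \<and> P x y z})"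
proof -
  have "{(x, y, z). x < m \<and> y < m \<and> z < m \<and> P x y z}
      = {..<m} \<times> {..<m} \<times> {..<m} \<inter> {(x, y, z). P x y z}"
    by auto
  moreover have "triple_sum m (\<lambda>x y z. of_bool (P x y z))
      = (\<Sum>t \<in> {..<m} \<times> {..<m} \<times> {..<m}. of_bool (t \<in> {(x, y, z). P x y z}))"
    unfolding triple_sum_def
    by (simp add: sum.cartesian_product case_prod_beta del: sum_of_bool_eq)
  ultimately show ?thesis
    by simp
qed

lemma triple_sum_rotate: "triple_sum m (\<lambda>x y z. F y z x) = triple_sum m F"
  using triple_sum_swap12[of m "\<lambda>x y z. F y z x"] triple_sum_swap23[of m F] by simp

lemma triple_sum_symmetric:
  assumes sym12: "\<And>x y z. F x y z = F y x z" and sym23: "\<And>x y z. F x y z = F x z y"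
    and off_diagonal: "\<And>x y z. \<not> distinct [x, y, z] \<Longrightarrow> F x y z = 0"
  shows "triple_sum m F = 6 * triple_sum m (\<lambda>x y z. of_bool (x < y \<and> y < z) * F x y z)"
proof -
  define G where "G x y z = of_bool (x < y \<and> y < z) * F x y z" for x y z
  have decompose: "F x y z = G x y z + G x z y + G y x z + G y z x + G z x y + G z y x" for x y z
  proof -
    have "F x z y = F x y z" "F y x z = F x y z" "F y z x = F x y z" "F z x y = F x y z" "F z y x = F x y z"
      by (metis sym12 sym23)+
    then show ?thesis
      unfolding G_def using off_diagonal[of x y z]
      by (cases "distinct [x, y, z]"; cases "x < y"; cases "y < z"; cases "x < z") auto
  qed
  have "triple_sum m F
      = triple_sum m (\<lambda>x y z. G x y z + G x z y + G y x z + G y z x + G z x y + G z y x)"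
    by (rule triple_sum_cong) (rule decompose)
  also have "\<dots> = triple_sum m G + triple_sum m (\<lambda>x y z. G x z y) + triple_sum m (\<lambda>x y z. G y x z)
      + triple_sum m (\<lambda>x y z. G y z x) + triple_sum m (\<lambda>x y z. G z x y) + triple_sum m (\<lambda>x y z. G z y x)"
    by (simp only: triple_sum_add)
  also have "\<dots> = 6 * triple_sum m G"
    using triple_sum_swap12[of m G] triple_sum_swap23[of m G] triple_sum_rotate[of m G]
      triple_sum_rotate[of m "\<lambda>x y z. G z x y"] triple_sum_swap12[of m "\<lambda>x y z. G z y x"]
    by simp
  finally show ?thesis unfolding G_def .
qed

lemma card_3_subsets_eq_sorted_triples:
  fixes Q :: "nat set \<Rightarrow> bool"
  shows "card {A. A \<subseteq> {0..<m} \<and> card A = 3 \<and> Q A} = card {(x, y, z). x < y \<and> y < z \<and> z < m \<and> Q {x, y, z}}"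
proof (rule sym, rule bij_betw_same_card, rule bij_betwI')
  fix t t' :: "nat \<times> nat \<times> nat" assume "t \<in> {(x, y, z). x < y \<and> y < z \<and> z < m \<and> Q {x, y, z}}"
    "t' \<in> {(x, y, z). x < y \<and> y < z \<and> z < m \<and> Q {x, y, z}}"
  then obtain x y z x' y' z' where "t = (x, y, z)" "t' = (x', y', z')"
    "x < y" "y < z" "x' < y'" "y' < z'" by auto
  then show "((\<lambda>(x, y, z). {x, y, z}) t = (\<lambda>(x, y, z). {x, y, z}) t') = (t = t')"
    using strict_sorted_equal[of "[x, y, z]" "[x', y', z']"] by auto
next
  fix A :: "nat set" assume "A \<in> {A. A \<subseteq> {0..<m} \<and> card A = 3 \<and> Q A}"
  then have A: "A \<subseteq> {0..<m}" "card A = 3" "Q A" by auto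
  then obtain xs where "sorted_wrt (<) xs" "set xs = A" "length xs = 3"
    using finite_set_strict_sorted[of A] by (metis card.infinite zero_neq_numeral)
  then obtain x y z where "A = {x, y, z}" "x < y" "y < z"
    by (auto simp: numeral_3_eq_3 length_Suc_conv)
  then show "\<exists>t\<in>{(x, y, z). x < y \<and> y < z \<and> z < m \<and> Q {x, y, z}}. A = (\<lambda>(x, y, z). {x, y, z}) t"
    using A by (intro bexI[of _ "(x, y, z)"]) auto
qed auto

lemma six_card_3_subsets:
  fixes Q :: "nat set \<Rightarrow> bool"
  shows "6 * real (card {A. A \<subseteq> {0..<m} \<and> card A = 3 \<and> Q A})
     = triple_sum m (\<lambda>x y z. of_bool (distinct [x, y, z] \<and> Q {x, y, z}))"
proof -
  have "triple_sum m (\<lambda>x y z. of_bool (distinct [x, y, z] \<and> Q {x, y, z}))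
      = 6 * triple_sum m (\<lambda>x y z. of_bool (x < y \<and> y < z) * of_bool (distinct [x, y, z] \<and> Q {x, y, z}))"
  proof (rule triple_sum_symmetric)
    fix x y z :: nat
    have "{y, x, z} = {x, y, z}" "{x, z, y} = {x, y, z}" by auto
    then show "of_bool (distinct [x, y, z] \<and> Q {x, y, z}) = (of_bool (distinct [y, x, z] \<and> Q {y, x, z}) :: real)"
      "of_bool (distinct [x, y, z] \<and> Q {x, y, z}) = (of_bool (distinct [x, z, y] \<and> Q {x, z, y}) :: real)"
      by auto
  qed auto
  also have "triple_sum m (\<lambda>x y z. of_bool (x < y \<and> y < z) * of_bool (distinct [x, y, z] \<and> Q {x, y, z}))
      = triple_sum m (\<lambda>x y z. of_bool (x < y \<and> y < z \<and> Q {x, y, z}))"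
    by (rule triple_sum_cong) auto
  also have "\<dots> = real (card {A. A \<subseteq> {0..<m} \<and> card A = 3 \<and> Q A})"
    unfolding triple_sum_of_bool card_3_subsets_eq_sorted_triples
    by (rule arg_cong[where f = "\<lambda>S. real (card S)"]) auto
  finally show ?thesis ..
qed

definition edges3 :: "('a \<Rightarrow> 'a \<Rightarrow> bool) \<Rightarrow> 'a \<Rightarrow> 'a \<Rightarrow> 'a \<Rightarrow> nat" where
  "edges3 E x y z = of_bool (E x y) + of_bool (E x z) + of_bool (E y z)"

lemma edges3_cong_set:
  assumes sym: "\<And>u v. E u v = E v u"
    and same: "{a, b, c} = {x, y, z}" and "distinct [a, b, c]" "distinct [x, y, z]"
  shows "edges3 E a b c = edges3 E x y z"
proof -
  have "a \<in> {x, y, z}" "b \<in> {x, y, z}" "c \<in> {x, y, z}" using same by auto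
  then show ?thesis using assms(3,4) unfolding edges3_def
    by (auto simp: sym[of x y] sym[of x z] sym[of y z])
qed

lemma edges3_Hk: "k \<le> 3 \<Longrightarrow> edges3 (Hk k) 0 1 2 = k"
  unfolding edges3_def Hk_def by (cases k) auto

lemma induces_iso_Hk_iff:
  assumes E: "simple_graph E" and k: "k \<le> 3" and xyz: "distinct [x, y, z]"
  shows "induces_iso (Hk k) 3 E {x, y, z} \<longleftrightarrow> edges3 E x y z = k"
proof -
  have sym: "\<And>u v. E u v = E v u" and irrefl: "\<And>v. \<not> E v v"
    using E unfolding simple_graph_def by blast+
  have three: "{0..<3} = {0, 1, 2::nat}" by auto
  show ?thesis
  proof
    assume "induces_iso (Hk k) 3 E {x, y, z}"
    then obtain f where f: "bij_betw f {0..<3} {x, y, z}"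
      and hom: "\<forall>i\<in>{0..<3}. \<forall>j\<in>{0..<3}. Hk k i j \<longleftrightarrow> E (f i) (f j)"
      unfolding induces_iso_def by blast
    have "{f 0, f 1, f 2} = {x, y, z}" and "distinct [f 0, f 1, f 2]"
      using f by (auto simp: bij_betw_def inj_on_def three)
    then have "edges3 E (f 0) (f 1) (f 2) = edges3 E x y z"
      by (rule edges3_cong_set[OF sym _ _ xyz])
    moreover have "edges3 E (f 0) (f 1) (f 2) = k"
      using hom edges3_Hk[OF k] by (simp add: edges3_def)
    ultimately show "edges3 E x y z = k" by simp
  next
    assume count: "edges3 E x y z = k"
    \<comment> \<open>list the vertices so that the edges present are the first k of 01, 02, 12\<close>
    have "\<exists>(a, b, c) \<in> {(x, y, z), (x, z, y), (y, x, z), (y, z, x), (z, x, y), (z, y, x)}.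
       (E a b \<longleftrightarrow> 1 \<le> k) \<and> (E a c \<longleftrightarrow> 2 \<le> k) \<and> (E b c \<longleftrightarrow> 3 \<le> k)"
      unfolding count[symmetric] edges3_def using xyz sym[of x y] sym[of x z] sym[of y z]
      by (cases "E x y"; cases "E x z"; cases "E y z") auto
    then obtain a b c where abc: "{a, b, c} = {x, y, z}" "distinct [a, b, c]"
      and edges: "E a b \<longleftrightarrow> 1 \<le> k" "E a c \<longleftrightarrow> 2 \<le> k" "E b c \<longleftrightarrow> 3 \<le> k"
      using xyz by auto
    define f where "f i = (if i = 0 then a else if i = 1 then b else c)" for i :: nat
    have "bij_betw f {0..<3} {x, y, z}"
      using abc unfolding bij_betw_def inj_on_def f_def three by auto
    moreover have "\<forall>i\<in>{0..<3}. \<forall>j\<in>{0..<3}. Hk k i j \<longleftrightarrow> E (f i) (f j)"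
      unfolding three f_def Hk_def using edges irrefl sym[of a b] sym[of a c] sym[of b c] by auto
    ultimately show "induces_iso (Hk k) 3 E {x, y, z}"
      unfolding induces_iso_def by blast
  qed
qed

definition ordered_triples :: "(nat \<Rightarrow> nat \<Rightarrow> bool) \<Rightarrow> nat \<Rightarrow> nat \<Rightarrow> real" where
  "ordered_triples E m k = triple_sum m (\<lambda>x y z. of_bool (distinct [x, y, z] \<and> edges3 E x y z = k))"

lemma real_choose_3: "real (m choose 3) = real m * (real m - 1) * (real m - 2) / 6"
  by (simp add: binomial_gbinomial gbinomial_pochhammer' pochhammer_prod eval_nat_numeral
      atLeast0LessThan lessThan_Suc field_simps)

lemma ind_density_Hk:
  assumes "simple_graph E" "k \<le> 3"
  shows "ind_density (Hk k) 3 m E = ordered_triples E m k / (real m * (real m - 1) * (real m - 2))"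
proof -
  have "6 * real (card {A. A \<subseteq> {0..<m} \<and> card A = 3 \<and> induces_iso (Hk k) 3 E A})
      = ordered_triples E m k"
    unfolding six_card_3_subsets ordered_triples_def
    by (rule triple_sum_cong) (use induces_iso_Hk_iff[OF assms] in auto)
  then show ?thesis
    unfolding ind_density_def real_choose_3 by (simp add: field_simps)
qed

section \<open>The upper bound\<close>

lemma sum_split_pairs_le:
  fixes E :: "nat \<Rightarrow> nat \<Rightarrow> bool"
  assumes "x < m"
  shows "(\<Sum>y<m. \<Sum>z<m. of_bool (distinct [x, y, z] \<and> E x y \<noteq> E x z)) \<le> (real m - 1)^2 / 2"
proof -
  define A where "A = {..<m} - {x}"
  define e where "e y = (of_bool (E x y) :: real)" for y
  have "(\<Sum>y<m. \<Sum>z<m. of_bool (distinct [x, y, z] \<and> E x y \<noteq> E x z))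
      = (\<Sum>y<m. of_bool (y \<in> A) * (\<Sum>z<m. of_bool (z \<in> A) * (e y + e z - 2 * e y * e z)))"
    unfolding A_def e_def sum_distrib_left by (intro sum.cong refl) auto
  also have "\<dots> = (\<Sum>y\<in>A. \<Sum>z\<in>A. e y + e z - 2 * e y * e z)"
  proof -
    have A: "{..<m} \<inter> A = A" by (auto simp: A_def)
    show ?thesis by (simp add: A)
  qed
  also have "\<dots> = 2 * real (card A) * sum e A - 2 * sum e A * sum e A"
    by (simp add: sum.distrib sum_subtractf sum_distrib_left sum_distrib_right algebra_simps)
  also have "\<dots> \<le> real (card A)^2 / 2"
    using zero_le_power2[of "real (card A) - 2 * sum e A"] by (simp add: power2_eq_square algebra_simps)
  also have "real (card A) = real m - 1"
    using assms by (simp add: A_def of_nat_diff)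
  finally show ?thesis .
qed

lemma ordered_triples_1_2_le:
  assumes "simple_graph E"
  shows "ordered_triples E m 1 + ordered_triples E m 2 \<le> 3/4 * real m * (real m - 1)^2"
proof -
  have sym: "\<And>u v. E u v = E v u" using assms unfolding simple_graph_def by blast
  define split where "split x y z = (of_bool (distinct [x, y, z] \<and> E x y \<noteq> E x z) :: real)" for x y z
  have split_count: "2 * (of_bool (distinct [x, y, z] \<and> edges3 E x y z = 1)
        + of_bool (distinct [x, y, z] \<and> edges3 E x y z = 2))
      = split x y z + split y x z + split z x y" for x y z
    unfolding split_def edges3_def using sym[of x y] sym[of x z] sym[of y z]
    by (cases "E x y"; cases "E x z"; cases "E y z") auto
  have "2 * (ordered_triples E m 1 + ordered_triples E m 2)
      = triple_sum m (\<lambda>x y z. 2 * (of_bool (distinct [x, y, z] \<and> edges3 E x y z = 1)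
        + of_bool (distinct [x, y, z] \<and> edges3 E x y z = 2)))"
    by (simp only: ordered_triples_def triple_sum_cmult triple_sum_add)
  also have "\<dots> = triple_sum m split + triple_sum m (\<lambda>x y z. split y x z) + triple_sum m (\<lambda>x y z. split z x y)"
    by (simp only: split_count triple_sum_add)
  also have "\<dots> = 3 * triple_sum m split"
    by (subst (2) triple_sum_swap12, subst (3) triple_sum_swap23, subst (3) triple_sum_swap12)
      (simp add: split_def conj_commute)
  also have "triple_sum m split \<le> (\<Sum>x<m. (real m - 1)^2 / 2)"
    unfolding triple_sum_def split_def by (intro sum_mono sum_split_pairs_le) simp
  finally show ?thesis by simp
qed

lemma ind_density_1_2_le:
  assumes "simple_graph E" "m \<ge> 3"
  shows "ind_density (Hk 1) 3 m E + ind_density (Hk 2) 3 m E \<le> 3/4 + 3/4 / (real m - 2)"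
proof -
  have pos: "real m * (real m - 1) * (real m - 2) > 0" using assms(2) by simp
  have "ind_density (Hk 1) 3 m E + ind_density (Hk 2) 3 m E
      = (ordered_triples E m 1 + ordered_triples E m 2) / (real m * (real m - 1) * (real m - 2))"
    by (simp add: ind_density_Hk[OF assms(1)] add_divide_distrib)
  also have "\<dots> \<le> 3/4 * real m * (real m - 1)^2 / (real m * (real m - 1) * (real m - 2))"
    by (rule divide_right_mono[OF ordered_triples_1_2_le[OF assms(1)]]) (use pos in simp)
  also have "\<dots> = 3/4 * (real m - 1) / (real m - 2)"
    using assms(2) by (simp add: power2_eq_square)
  also have "\<dots> = 3/4 + 3/4 / (real m - 2)"
    using assms(2) by (simp add: field_simps)
  finally show ?thesis .
qed

lemma LIMSEQ_if_abs_diff_le_inverse: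
  fixes x :: "nat \<Rightarrow> real"
  assumes "\<And>n. \<bar>x n - l\<bar> \<le> 1 / Suc n"
  shows "x \<longlonglongrightarrow> l"
proof -
  have "(\<lambda>n. x n - l) \<longlonglongrightarrow> 0"
    by (rule Lim_null_comparison[OF always_eventually LIMSEQ_Suc[OF lim_inverse_n']]) (use assms in simp)
  then show ?thesis by (simp only: LIM_zero_iff)
qed

lemma S_set_graph_sequence:
  assumes "(d0, d1, d2, d3) \<in> S_set"
  obtains m E where "\<And>n. n \<le> m n" "\<And>n. simple_graph (E n)"
    "(\<lambda>n. ind_density (Hk 0) 3 (m n) (E n)) \<longlonglongrightarrow> d0"
    "(\<lambda>n. ind_density (Hk 1) 3 (m n) (E n)) \<longlonglongrightarrow> d1"
    "(\<lambda>n. ind_density (Hk 2) 3 (m n) (E n)) \<longlonglongrightarrow> d2"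
    "(\<lambda>n. ind_density (Hk 3) 3 (m n) (E n)) \<longlonglongrightarrow> d3"
proof -
  have "\<forall>n. \<exists>m E. n \<le> m \<and> simple_graph E \<and>
      \<bar>ind_density (Hk 0) 3 m E - d0\<bar> \<le> 1 / Suc n \<and> \<bar>ind_density (Hk 1) 3 m E - d1\<bar> \<le> 1 / Suc n \<and>
      \<bar>ind_density (Hk 2) 3 m E - d2\<bar> \<le> 1 / Suc n \<and> \<bar>ind_density (Hk 3) 3 m E - d3\<bar> \<le> 1 / Suc n"
    using assms unfolding S_set_def by simp
  then obtain m E where "\<And>n. n \<le> m n \<and> simple_graph (E n) \<and>
      \<bar>ind_density (Hk 0) 3 (m n) (E n) - d0\<bar> \<le> 1 / Suc n \<and> \<bar>ind_density (Hk 1) 3 (m n) (E n) - d1\<bar> \<le> 1 / Suc n \<and>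
      \<bar>ind_density (Hk 2) 3 (m n) (E n) - d2\<bar> \<le> 1 / Suc n \<and> \<bar>ind_density (Hk 3) 3 (m n) (E n) - d3\<bar> \<le> 1 / Suc n"
    by metis
  then show ?thesis
    by (intro that[of m E] LIMSEQ_if_abs_diff_le_inverse) blast+
qed

lemma S_set_bounds:
  assumes "(d0, d1, d2, d3) \<in> S_set"
  shows "0 \<le> d1" "0 \<le> d2" "d1 + d2 \<le> 3/4"
proof -
  obtain m E where m: "\<And>n. n \<le> m n" and E: "\<And>n. simple_graph (E n)"
    and "(\<lambda>n. ind_density (Hk 0) 3 (m n) (E n)) \<longlonglongrightarrow> d0"
    and d1: "(\<lambda>n. ind_density (Hk 1) 3 (m n) (E n)) \<longlonglongrightarrow> d1"
    and d2: "(\<lambda>n. ind_density (Hk 2) 3 (m n) (E n)) \<longlonglongrightarrow> d2"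
    and "(\<lambda>n. ind_density (Hk 3) 3 (m n) (E n)) \<longlonglongrightarrow> d3"
    using S_set_graph_sequence[OF assms] by blast
  show "0 \<le> d1" "0 \<le> d2"
    by (intro LIMSEQ_le_const[OF d1] LIMSEQ_le_const[OF d2], simp add: ind_density_def)+
  have "\<forall>n\<ge>3. ind_density (Hk 1) 3 (m n) (E n) + ind_density (Hk 2) 3 (m n) (E n) \<le> 3/4 + 3/4 / (real n - 2)"
  proof (intro allI impI)
    fix n :: nat assume "3 \<le> n"
    then have "3 \<le> m n" using m[of n] by simp
    then have "ind_density (Hk 1) 3 (m n) (E n) + ind_density (Hk 2) 3 (m n) (E n)
        \<le> 3/4 + 3/4 / (real (m n) - 2)"
      by (rule ind_density_1_2_le[OF E])
    also have "3/4 / (real (m n) - 2) \<le> 3/4 / (real n - 2)"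
      using \<open>3 \<le> n\<close> m[of n] by (intro divide_left_mono) auto
    finally show "ind_density (Hk 1) 3 (m n) (E n) + ind_density (Hk 2) 3 (m n) (E n) \<le> 3/4 + 3/4 / (real n - 2)"
      by simp
  qed
  moreover have "(\<lambda>n. 3/4 + 3/4 / (real n - 2)) \<longlonglongrightarrow> 3/4"
    by real_asymp
  ultimately show "d1 + d2 \<le> 3/4"
    using LIMSEQ_le[OF tendsto_add[OF d1 d2]] by blast
qed

lemma eventually_abs_diff_le:
  fixes x :: "nat \<Rightarrow> real"
  assumes "x \<longlonglongrightarrow> l" "0 < \<epsilon>"
  shows "\<forall>\<^sub>F n in sequentially. \<bar>x n - l\<bar> \<le> \<epsilon>"
  using assms(1)[unfolded tendsto_iff, rule_format, OF assms(2)]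
  by (rule eventually_mono) (simp add: dist_real_def)

lemma S_set_if_LIMSEQ:
  assumes "\<And>n. simple_graph (E n)"
    and "(\<lambda>n. ind_density (Hk 0) 3 n (E n)) \<longlonglongrightarrow> d0"
    and "(\<lambda>n. ind_density (Hk 1) 3 n (E n)) \<longlonglongrightarrow> d1"
    and "(\<lambda>n. ind_density (Hk 2) 3 n (E n)) \<longlonglongrightarrow> d2"
    and "(\<lambda>n. ind_density (Hk 3) 3 n (E n)) \<longlonglongrightarrow> d3"
  shows "(d0, d1, d2, d3) \<in> S_set"
  unfolding S_set_def mem_Collect_eq prod.case
proof (intro allI impI)
  fix \<epsilon> :: real and n :: nat assume "0 < \<epsilon>"
  then have "\<forall>\<^sub>F m in sequentially. n \<le> m \<and>
      \<bar>ind_density (Hk 0) 3 m (E m) - d0\<bar> \<le> \<epsilon> \<and> \<bar>ind_density (Hk 1) 3 m (E m) - d1\<bar> \<le> \<epsilon> \<and>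
      \<bar>ind_density (Hk 2) 3 m (E m) - d2\<bar> \<le> \<epsilon> \<and> \<bar>ind_density (Hk 3) 3 m (E m) - d3\<bar> \<le> \<epsilon>"
    using assms(2-5) by (intro eventually_conj eventually_ge_at_top eventually_abs_diff_le)
  then obtain m where "n \<le> m \<and>
      \<bar>ind_density (Hk 0) 3 m (E m) - d0\<bar> \<le> \<epsilon> \<and> \<bar>ind_density (Hk 1) 3 m (E m) - d1\<bar> \<le> \<epsilon> \<and>
      \<bar>ind_density (Hk 2) 3 m (E m) - d2\<bar> \<le> \<epsilon> \<and> \<bar>ind_density (Hk 3) 3 m (E m) - d3\<bar> \<le> \<epsilon>"
    using eventually_happens'[OF sequentially_bot] by blast
  then show "\<exists>m E. n \<le> m \<and> simple_graph E \<and>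
      \<bar>ind_density (Hk 0) 3 m E - d0\<bar> \<le> \<epsilon> \<and> \<bar>ind_density (Hk 1) 3 m E - d1\<bar> \<le> \<epsilon> \<and>
      \<bar>ind_density (Hk 2) 3 m E - d2\<bar> \<le> \<epsilon> \<and> \<bar>ind_density (Hk 3) 3 m E - d3\<bar> \<le> \<epsilon>"
    using assms(1) by blast
qed

section \<open>Blow-ups\<close>

definition part_start :: "(nat \<Rightarrow> real) \<Rightarrow> nat \<Rightarrow> nat \<Rightarrow> nat" where
  "part_start w m j = nat \<lfloor>real m * (\<Sum>i<j. w i)\<rfloor>"

definition part_of :: "(nat \<Rightarrow> real) \<Rightarrow> nat \<Rightarrow> nat \<Rightarrow> nat" where
  "part_of w m u = (LEAST i. u < part_start w m (Suc i))"

definition part_size :: "(nat \<Rightarrow> real) \<Rightarrow> nat \<Rightarrow> nat \<Rightarrow> nat" where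
  "part_size w m i = part_start w m (Suc i) - part_start w m i"

text \<open>The pattern P may have loops: P i i makes part i a clique, otherwise it is an independent set.\<close>

definition blowup :: "(nat \<Rightarrow> nat \<Rightarrow> bool) \<Rightarrow> (nat \<Rightarrow> real) \<Rightarrow> nat \<Rightarrow> nat \<Rightarrow> nat \<Rightarrow> bool" where
  "blowup P w m u v \<longleftrightarrow> u \<noteq> v \<and> P (part_of w m u) (part_of w m v)"

definition blowup_density :: "(nat \<Rightarrow> nat \<Rightarrow> bool) \<Rightarrow> nat \<Rightarrow> (nat \<Rightarrow> real) \<Rightarrow> nat \<Rightarrow> real" where
  "blowup_density P r w k = (\<Sum>i<r. \<Sum>j<r. \<Sum>l<r. w i * w j * w l * of_bool (edges3 P i j l = k))"

lemma part_start_0: "part_start w m 0 = 0"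
  by (simp add: part_start_def)

lemma simple_graph_blowup: "(\<And>i j. P i j = P j i) \<Longrightarrow> simple_graph (blowup P w m)"
  unfolding simple_graph_def blowup_def by auto

lemma ordered_triples_blowup_approx:
  "\<bar>ordered_triples (blowup P w m) m k
      - triple_sum m (\<lambda>x y z. of_bool (edges3 P (part_of w m x) (part_of w m y) (part_of w m z) = k))\<bar>
     \<le> 3 * real m ^ 2"
proof -
  let ?F = "\<lambda>x y z. (of_bool (distinct [x, y, z] \<and> edges3 (blowup P w m) x y z = k) :: real)"
  let ?G = "\<lambda>x y z. (of_bool (edges3 P (part_of w m x) (part_of w m y) (part_of w m z) = k) :: real)"
  let ?B = "\<lambda>x y z. (of_bool (x = y) + of_bool (x = z) + of_bool (y = z) :: real)"
  have "\<bar>?F x y z - ?G x y z\<bar> \<le> ?B x y z" for x y z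
    by (cases "distinct [x, y, z]") (auto simp: edges3_def blowup_def)
  then have "\<bar>triple_sum m (\<lambda>x y z. ?F x y z - ?G x y z)\<bar> \<le> triple_sum m ?B"
    by (intro order_trans[OF triple_sum_abs_le] triple_sum_mono)
  moreover have "triple_sum m ?B = 3 * real m ^ 2"
    by (simp add: triple_sum_add triple_sum_def power2_eq_square)
  ultimately show ?thesis
    by (simp add: ordered_triples_def triple_sum_diff)
qed

locale blowup_weights =
  fixes r :: nat and w :: "nat \<Rightarrow> real"
  assumes weight_nonneg: "i < r \<Longrightarrow> 0 \<le> w i"
    and weight_sum: "(\<Sum>i<r. w i) = 1"
begin

lemma blowup_density_nonneg: "0 \<le> blowup_density P r w k"
  unfolding blowup_density_def by (intro sum_nonneg) (simp add: weight_nonneg)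

lemma sum_weights_nonneg: "j \<le> r \<Longrightarrow> 0 \<le> (\<Sum>i<j. w i)"
  by (intro sum_nonneg weight_nonneg) auto

lemma part_start_mono: "j \<le> j' \<Longrightarrow> j' \<le> r \<Longrightarrow> part_start w m j \<le> part_start w m j'"
  unfolding part_start_def
  by (intro nat_mono floor_mono mult_left_mono sum_mono2) (auto intro: weight_nonneg)

lemma part_start_r: "part_start w m r = m"
  by (simp add: part_start_def weight_sum)

lemma part_of_eqI:
  assumes "i < r" "part_start w m i \<le> u" "u < part_start w m (Suc i)"
  shows "part_of w m u = i"
  unfolding part_of_def
proof (rule Least_equality)
  show "u < part_start w m (Suc i)" by fact
next
  fix j assume "u < part_start w m (Suc j)"
  then show "i \<le> j"
    using part_start_mono[of "Suc j" i m] assms by (cases "j < i") auto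
qed

lemma sum_over_parts:
  "(\<Sum>u<m. g (part_of w m u)) = (\<Sum>i<r. real (part_size w m i) * g i)"
proof -
  have "(\<Sum>u\<in>{0..<part_start w m n}. g (part_of w m u)) = (\<Sum>i<n. real (part_size w m i) * g i)"
    if "n \<le> r" for n
    using that
  proof (induction n)
    case 0
    then show ?case by (simp add: part_start_0)
  next
    case (Suc n)
    have mono: "part_start w m 0 \<le> part_start w m n" "part_start w m n \<le> part_start w m (Suc n)"
      using Suc.prems by (auto intro: part_start_mono)
    have "(\<Sum>u\<in>{part_start w m n..<part_start w m (Suc n)}. g (part_of w m u))
        = (\<Sum>u\<in>{part_start w m n..<part_start w m (Suc n)}. g n)"
      using Suc.prems by (intro sum.cong refl arg_cong[where f = g] part_of_eqI) auto
    also have "\<dots> = real (part_size w m n) * g n"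
      by (simp add: part_size_def)
    finally have "(\<Sum>u\<in>{part_start w m n..<part_start w m (Suc n)}. g (part_of w m u))
        = real (part_size w m n) * g n" .
    moreover have "(\<Sum>u\<in>{0..<part_start w m (Suc n)}. g (part_of w m u))
        = (\<Sum>u\<in>{0..<part_start w m n}. g (part_of w m u))
          + (\<Sum>u\<in>{part_start w m n..<part_start w m (Suc n)}. g (part_of w m u))"
      using mono by (simp add: part_start_0 sum.atLeastLessThan_concat)
    ultimately show ?case
      using Suc by simp
  qed
  from this[of r] show ?thesis
    by (simp add: part_start_r atLeast0LessThan)
qed

lemma triple_sum_over_parts:
  "triple_sum m (\<lambda>x y z. F (part_of w m x) (part_of w m y) (part_of w m z))
     = (\<Sum>i<r. \<Sum>j<r. \<Sum>l<r. real (part_size w m i) * real (part_size w m j) * real (part_size w m l) * F i j l)"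
proof -
  have "(\<Sum>i<r. \<Sum>j<r. \<Sum>l<r. real (part_size w m i) * real (part_size w m j) * real (part_size w m l) * F i j l)
      = (\<Sum>i<r. real (part_size w m i) * (\<Sum>j<r. real (part_size w m j) * (\<Sum>l<r. real (part_size w m l) * F i j l)))"
    by (simp add: sum_distrib_left mult.assoc)
  then show ?thesis
    unfolding triple_sum_def by (simp only: sum_over_parts[symmetric])
qed

lemma part_start_limit:
  assumes "j \<le> r"
  shows "(\<lambda>m. real (part_start w m j) / real m) \<longlonglongrightarrow> (\<Sum>i<j. w i)"
proof (rule tendsto_sandwich)
  let ?c = "\<Sum>i<j. w i"
  have start: "real (part_start w m j) = of_int \<lfloor>real m * ?c\<rfloor>" for m
    unfolding part_start_def using sum_weights_nonneg[OF assms] by simp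
  show "\<forall>\<^sub>F m in sequentially. ?c - 1 / real m \<le> real (part_start w m j) / real m"
    using eventually_gt_at_top[of 0]
  proof eventually_elim
    case (elim m)
    have "?c - 1 / real m = (real m * ?c - 1) / real m"
      using elim by (simp add: field_simps)
    also have "\<dots> \<le> real (part_start w m j) / real m"
      unfolding start by (intro divide_right_mono) linarith+
    finally show ?case .
  qed
  show "\<forall>\<^sub>F m in sequentially. real (part_start w m j) / real m \<le> ?c"
    using eventually_gt_at_top[of 0]
  proof eventually_elim
    case (elim m)
    have "real (part_start w m j) / real m \<le> real m * ?c / real m"
      unfolding start by (intro divide_right_mono) linarith+
    then show ?case
      using elim by simp
  qed
  show "(\<lambda>m. ?c - 1 / real m) \<longlonglongrightarrow> ?c"
    using tendsto_diff[OF tendsto_const lim_inverse_n', of ?c] by simp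
qed simp

lemma part_size_limit:
  assumes "i < r"
  shows "(\<lambda>m. real (part_size w m i) / real m) \<longlonglongrightarrow> w i"
proof -
  have "real (part_size w m i) / real m = real (part_start w m (Suc i)) / real m - real (part_start w m i) / real m" for m
    using part_start_mono[of i "Suc i" m] assms by (simp add: part_size_def of_nat_diff diff_divide_distrib)
  moreover have "(\<lambda>m. real (part_start w m (Suc i)) / real m - real (part_start w m i) / real m)
      \<longlonglongrightarrow> (\<Sum>j<Suc i. w j) - (\<Sum>j<i. w j)"
    using assms by (intro tendsto_diff part_start_limit) auto
  ultimately show ?thesis
    by simp
qed

lemma blowup_triple_sum_limit:
  "(\<lambda>m. triple_sum m (\<lambda>x y z. of_bool (edges3 P (part_of w m x) (part_of w m y) (part_of w m z) = k)) / real m ^ 3)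
     \<longlonglongrightarrow> blowup_density P r w k"
proof -
  have scaled: "triple_sum m (\<lambda>x y z. of_bool (edges3 P (part_of w m x) (part_of w m y) (part_of w m z) = k)) / real m ^ 3
      = (\<Sum>i<r. \<Sum>j<r. \<Sum>l<r. (real (part_size w m i) / real m) * (real (part_size w m j) / real m)
          * (real (part_size w m l) / real m) * of_bool (edges3 P i j l = k))" for m
    unfolding triple_sum_over_parts[where F = "\<lambda>i j l. of_bool (edges3 P i j l = k)"]
    by (simp add: sum_divide_distrib power3_eq_cube del: sum_mult_of_bool_eq)
  show ?thesis
    unfolding blowup_density_def scaled
    by (intro tendsto_sum tendsto_mult tendsto_const part_size_limit) simp_all
qed

lemma ind_density_blowup_limit:
  assumes "\<And>i j. P i j = P j i" "k \<le> 3"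
  shows "(\<lambda>m. ind_density (Hk k) 3 m (blowup P w m)) \<longlonglongrightarrow> blowup_density P r w k"
proof -
  let ?U = "\<lambda>m. triple_sum m (\<lambda>x y z. of_bool (edges3 P (part_of w m x) (part_of w m y) (part_of w m z) = k))"
  let ?T = "\<lambda>m. ordered_triples (blowup P w m) m k"
  let ?c = "\<lambda>m. real m * (real m - 1) * (real m - 2)"
  have "(\<lambda>m. ?U m / real m ^ 3 * (real m ^ 3 / ?c m) + (?T m - ?U m) / ?c m)
      \<longlonglongrightarrow> blowup_density P r w k * 1 + 0"
  proof (intro tendsto_add tendsto_mult blowup_triple_sum_limit)
    show "(\<lambda>m. real m ^ 3 / ?c m) \<longlonglongrightarrow> 1"
      by real_asymp
    show "(\<lambda>m. (?T m - ?U m) / ?c m) \<longlonglongrightarrow> 0"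
    proof (rule Lim_null_comparison)
      show "\<forall>\<^sub>F m in sequentially. norm ((?T m - ?U m) / ?c m) \<le> 3 * real m ^ 2 / ?c m"
        using eventually_ge_at_top[of 3]
      proof eventually_elim
        case (elim m)
        then have "0 < ?c m" by simp
        then show ?case
          using ordered_triples_blowup_approx[of P w m k]
          by (simp add: abs_divide divide_right_mono)
      qed
      show "(\<lambda>m. 3 * real m ^ 2 / ?c m) \<longlonglongrightarrow> 0"
        by real_asymp
    qed
  qed
  moreover have "\<forall>\<^sub>F m in sequentially.
      ?U m / real m ^ 3 * (real m ^ 3 / ?c m) + (?T m - ?U m) / ?c m = ind_density (Hk k) 3 m (blowup P w m)"
    using eventually_ge_at_top[of 3]
  proof eventually_elim
    case (elim m)
    then have "?U m / real m ^ 3 * (real m ^ 3 / ?c m) = ?U m / ?c m"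
      by simp
    then show ?case
      by (simp add: ind_density_Hk[OF simple_graph_blowup[OF assms(1)] assms(2)] diff_divide_distrib)
  qed
  ultimately show ?thesis
    by (simp add: Lim_transform_eventually)
qed

lemma blowup_densities_in_S_set:
  assumes "\<And>i j. P i j = P j i"
  shows "(blowup_density P r w 0, blowup_density P r w 1, blowup_density P r w 2, blowup_density P r w 3) \<in> S_set"
  by (intro S_set_if_LIMSEQ[where E = "blowup P w"] simple_graph_blowup ind_density_blowup_limit assms) auto

end

section \<open>A two-parameter family of blow-ups\<close>

definition five_part_pattern :: "nat \<Rightarrow> nat \<Rightarrow> bool" where
  "five_part_pattern i j \<longleftrightarrow> (let a = min i j; b = max i j in
     (a = b \<and> a \<le> 2) \<or> (a = 0 \<and> (b = 1 \<or> b = 3 \<or> b = 4)) \<or> (a = 1 \<and> b = 3) \<or> (a = 2 \<and> b = 4) \<or> (a = 3 \<and> b = 4))"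

definition five_part_weights :: "real \<Rightarrow> real \<Rightarrow> nat \<Rightarrow> real" where
  "five_part_weights u v i = (if i = 0 then 1 - u else if i \<le> 2 then u * v / 2 else u * (1 - v) / 2)"

lemma five_part_pattern_sym: "five_part_pattern i j = five_part_pattern j i"
  unfolding five_part_pattern_def by (simp add: min.commute max.commute)

lemma blowup_weights_five_part:
  assumes "0 \<le> u" "u \<le> 1" "0 \<le> v" "v \<le> 1"
  shows "blowup_weights 5 (five_part_weights u v)"
proof
  show "0 \<le> five_part_weights u v i" for i
    using assms by (simp add: five_part_weights_def)
  show "(\<Sum>i<5. five_part_weights u v i) = 1"
    by (simp add: five_part_weights_def numeral_eq_Suc lessThan_Suc algebra_simps)
qed

lemma blowup_density_five_part:
  "blowup_density five_part_pattern 5 (five_part_weights u v) 1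
     = 3/2 * u * v - 3/2 * u\<^sup>2 * v + 3/4 * u\<^sup>2 * v\<^sup>2 + 3/2 * u ^ 3 * v\<^sup>2 - 3/2 * u ^ 3 * v ^ 3"
  "blowup_density five_part_pattern 5 (five_part_weights u v) 2
     = 3/2 * u\<^sup>2 - 3/2 * u\<^sup>2 * v\<^sup>2 - 3/4 * u ^ 3 - 3/4 * u ^ 3 * v\<^sup>2 + 3/2 * u ^ 3 * v ^ 3"
  unfolding blowup_density_def
  by (simp_all add: lessThan_nat_numeral five_part_weights_def edges3_def five_part_pattern_def
      del: sum_mult_of_bool_eq sum_of_bool_mult_eq)
    (simp_all add: field_simps power2_eq_square power3_eq_cube)

lemma poincare_miranda_unit_square:
  fixes f g :: "real \<Rightarrow> real \<Rightarrow> real"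
  assumes cont: "continuous_on ({0..1} \<times> {0..1}) (\<lambda>p. f (fst p) (snd p))"
      "continuous_on ({0..1} \<times> {0..1}) (\<lambda>p. g (fst p) (snd p))"
    and f0: "\<And>v. 0 \<le> v \<Longrightarrow> v \<le> 1 \<Longrightarrow> f 0 v \<le> 0"
    and f1: "\<And>v. 0 \<le> v \<Longrightarrow> v \<le> 1 \<Longrightarrow> 0 \<le> f 1 v"
    and g0: "\<And>u. 0 \<le> u \<Longrightarrow> u \<le> 1 \<Longrightarrow> g u 0 \<le> 0"
    and g1: "\<And>u. 0 \<le> u \<Longrightarrow> u \<le> 1 \<Longrightarrow> 0 \<le> g u 1"
  obtains u v where "0 \<le> u" "u \<le> 1" "0 \<le> v" "v \<le> 1" "f u v = 0" "g u v = 0"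
proof -
  let ?S = "{0..1::real} \<times> {0..1::real}"
  define clamp where "clamp x = max 0 (min 1 x)" for x :: real
  define h where "h p = (clamp (fst p - f (fst p) (snd p)), clamp (snd p - g (fst p) (snd p)))" for p
  have "continuous_on ?S h"
    unfolding h_def clamp_def by (intro continuous_intros cont)
  moreover have "h \<in> ?S \<rightarrow> ?S"
    by (auto simp: h_def clamp_def)
  moreover have "compact ?S" "convex ?S" "?S \<noteq> {}"
    by (auto intro: compact_Times convex_Times)
  ultimately obtain p where "p \<in> ?S" "h p = p"
    using brouwer[of ?S h] by blast
  then obtain u v where uv: "(u, v) \<in> ?S" "h (u, v) = (u, v)"
    by (cases p) auto
  \<comment> \<open>\<open>f u v \<noteq> 0\<close> at a fixed point would force \<open>u = 0, f u v > 0\<close> or \<open>u = 1, f u v < 0\<close>\<close>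
  have "f u v = 0"
    using uv f0[of v] f1[of v] by (auto simp: h_def clamp_def max_def min_def split: if_splits)
  moreover have "g u v = 0"
    using uv g0[of u] g1[of u] by (auto simp: h_def clamp_def max_def min_def split: if_splits)
  ultimately show ?thesis
    using uv that by auto
qed

lemma five_part_densities_onto_triangle:
  assumes "0 \<le> d1" "0 \<le> d2" "d1 + d2 \<le> 3/4"
  obtains u v where "0 \<le> u" "u \<le> 1" "0 \<le> v" "v \<le> 1"
    "blowup_density five_part_pattern 5 (five_part_weights u v) 1 = d1"
    "blowup_density five_part_pattern 5 (five_part_weights u v) 2 = d2"
proof -
  define f1 where "f1 u v = blowup_density five_part_pattern 5 (five_part_weights u v) 1" for u v
  define f2 where "f2 u v = blowup_density five_part_pattern 5 (five_part_weights u v) 2" for u v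
  have nonneg: "0 \<le> f1 u v" "0 \<le> f2 u v" if "0 \<le> u" "u \<le> 1" "0 \<le> v" "v \<le> 1" for u v
    unfolding f1_def f2_def by (simp_all add: blowup_weights.blowup_density_nonneg[OF blowup_weights_five_part[OF that]])
  have edges: "f1 0 v = 0" "f2 0 v = 0" "f1 1 v + f2 1 v = 3/4" "f1 u 0 = 0" "f2 u 1 = 0" for u v
    unfolding f1_def f2_def blowup_density_five_part by (simp_all add: algebra_simps power2_eq_square power3_eq_cube)
  obtain u v where uv: "0 \<le> u" "u \<le> 1" "0 \<le> v" "v \<le> 1"
    and sum: "f1 u v + f2 u v - (d1 + d2) = 0" and ratio: "(d1 + d2) * f1 u v - d1 * (f1 u v + f2 u v) = 0"
  proof (rule poincare_miranda_unit_square)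
    show "continuous_on ({0..1} \<times> {0..1}) (\<lambda>p. f1 (fst p) (snd p) + f2 (fst p) (snd p) - (d1 + d2))"
      "continuous_on ({0..1} \<times> {0..1}) (\<lambda>p. (d1 + d2) * f1 (fst p) (snd p) - d1 * (f1 (fst p) (snd p) + f2 (fst p) (snd p)))"
      unfolding f1_def f2_def blowup_density_five_part by (intro continuous_intros)+
    show "f1 0 v + f2 0 v - (d1 + d2) \<le> 0" for v
      using assms edges by simp
    show "0 \<le> f1 1 v + f2 1 v - (d1 + d2)" for v
      using assms edges(3)[of v] by simp
    show "(d1 + d2) * f1 u 0 - d1 * (f1 u 0 + f2 u 0) \<le> 0" if "0 \<le> u" "u \<le> 1" for u
      using assms edges(4) nonneg[OF that] by simp
    show "0 \<le> (d1 + d2) * f1 u 1 - d1 * (f1 u 1 + f2 u 1)" if "0 \<le> u" "u \<le> 1" for u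
      using assms edges(5) nonneg[OF that, of 1] by (simp add: mult_right_mono)
  qed
  have "f1 u v = d1 \<and> f2 u v = d2"
  proof (cases "d1 + d2 = 0")
    case True
    then show ?thesis using sum nonneg[OF uv] assms by linarith
  next
    case False
    have "(d1 + d2) * f1 u v = (d1 + d2) * d1"
      using sum ratio by (simp add: algebra_simps)
    then have "f1 u v = d1" using False by simp
    then show ?thesis using sum by simp
  qed
  then show ?thesis
    using that uv unfolding f1_def f2_def by blast
qed

theorem theorem13:
  shows "S12 = {(d1, d2). d1 \<ge> 0 \<and> d2 \<ge> 0 \<and> d1 + d2 \<le> 3/4}"
proof (intro set_eqI iffI; clarify)
  fix d1 d2 assume "(d1, d2) \<in> S12"
  then obtain d0 d3 where "(d0, d1, d2, d3) \<in> S_set"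
    unfolding S12_def by blast
  then show "d1 \<ge> 0 \<and> d2 \<ge> 0 \<and> d1 + d2 \<le> 3/4"
    using S_set_bounds by blast
next
  fix d1 d2 :: real assume "0 \<le> d1" "0 \<le> d2" "d1 + d2 \<le> 3/4"
  then obtain u v where uv: "0 \<le> u" "u \<le> 1" "0 \<le> v" "v \<le> 1"
    and "blowup_density five_part_pattern 5 (five_part_weights u v) 1 = d1"
    and "blowup_density five_part_pattern 5 (five_part_weights u v) 2 = d2"
    by (rule five_part_densities_onto_triangle)
  moreover
  let ?D = "blowup_density five_part_pattern 5 (five_part_weights u v)"
  have "(?D 0, ?D 1, ?D 2, ?D 3) \<in> S_set"
    by (rule blowup_weights.blowup_densities_in_S_set[OF blowup_weights_five_part[OF uv] five_part_pattern_sym])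
  ultimately show "(d1, d2) \<in> S12"
    unfolding S12_def by auto
qed

end
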